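(* Let $G$ be a hypo-efficient domination graph having at least one $\gamma$-critical vertex. Then \[(\delta(G)+1)(\gamma(G)-1)+1\leq |V(G)|\leq(\Delta(G)+1)(\gamma(G)-1)+1.\]
   Context: All graphs are finite, simple and undirected. For $v\in V(G)$, $N[v]$ is the closed neighborhood of $v$. A set $D\subseteq V(G)$ is dominating if every vertex of $G$ not in $D$ has a neighbor in $D$; $\gamma(G)$ is the minimum size of a dominating set. A vertex $v$ is $\gamma$-critical if $\gamma(G-v)<\gamma(G)$. A set $D\subseteq V(H)$ is an efficient dominating set (EDS) of $H$ if $|N_H[v]\cap D|=1$ for every $v\in V(H)$. $G$ is a hypo-efficient domination graph if $G$ has no EDS but $G-v$ has at least one EDS for every $v\in V(G)$. $\delta(G)$, $\Delta(G)$ are the minimum and maximum degree. *)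

theory Defs
  imports Main
begin

text \<open>Vertex deletion G - v is (V - {v}, E) (E restricted implicitly by V).\<close>

definition simple_graph :: "'a set \<Rightarrow> ('a \<Rightarrow> 'a \<Rightarrow> bool) \<Rightarrow> bool" where
  "simple_graph V E \<longleftrightarrow> finite V \<and> (\<forall>u v. E u v \<longrightarrow> u \<in> V \<and> v \<in> V)
     \<and> (\<forall>u v. E u v \<longrightarrow> E v u) \<and> (\<forall>v. \<not> E v v)"

definition nbhd :: "'a set \<Rightarrow> ('a \<Rightarrow> 'a \<Rightarrow> bool) \<Rightarrow> 'a \<Rightarrow> 'a set" where
  "nbhd V E v = {u \<in> V. E v u}"

definition closed_nbhd :: "'a set \<Rightarrow> ('a \<Rightarrow> 'a \<Rightarrow> bool) \<Rightarrow> 'a \<Rightarrow> 'a set" where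
  "closed_nbhd V E v = insert v (nbhd V E v)"

definition degree :: "'a set \<Rightarrow> ('a \<Rightarrow> 'a \<Rightarrow> bool) \<Rightarrow> 'a \<Rightarrow> nat" where
  "degree V E v = card (nbhd V E v)"

definition min_degree :: "'a set \<Rightarrow> ('a \<Rightarrow> 'a \<Rightarrow> bool) \<Rightarrow> nat" where
  "min_degree V E = Min (degree V E ` V)"

definition max_degree :: "'a set \<Rightarrow> ('a \<Rightarrow> 'a \<Rightarrow> bool) \<Rightarrow> nat" where
  "max_degree V E = Max (degree V E ` V)"

definition dominating :: "'a set \<Rightarrow> ('a \<Rightarrow> 'a \<Rightarrow> bool) \<Rightarrow> 'a set \<Rightarrow> bool" where
  "dominating V E D \<longleftrightarrow> D \<subseteq> V \<and> (\<forall>v \<in> V - D. \<exists>u \<in> D. E v u)"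

definition domination_number :: "'a set \<Rightarrow> ('a \<Rightarrow> 'a \<Rightarrow> bool) \<Rightarrow> nat" where
  "domination_number V E = (LEAST k. \<exists>D. dominating V E D \<and> card D = k)"

definition gamma_critical :: "'a set \<Rightarrow> ('a \<Rightarrow> 'a \<Rightarrow> bool) \<Rightarrow> 'a \<Rightarrow> bool" where
  "gamma_critical V E v \<longleftrightarrow> v \<in> V \<and>
     domination_number (V - {v}) E < domination_number V E"

definition efficient_dominating :: "'a set \<Rightarrow> ('a \<Rightarrow> 'a \<Rightarrow> bool) \<Rightarrow> 'a set \<Rightarrow> bool" where
  "efficient_dominating V E D \<longleftrightarrow> D \<subseteq> V \<and> (\<forall>v \<in> V. card (closed_nbhd V E v \<inter> D) = 1)"

definition has_eds :: "'a set \<Rightarrow> ('a \<Rightarrow> 'a \<Rightarrow> bool) \<Rightarrow> bool" where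
  "has_eds V E \<longleftrightarrow> (\<exists>D. efficient_dominating V E D)"

definition hypo_efficient :: "'a set \<Rightarrow> ('a \<Rightarrow> 'a \<Rightarrow> bool) \<Rightarrow> bool" where
  "hypo_efficient V E \<longleftrightarrow> \<not> has_eds V E \<and> (\<forall>v \<in> V. has_eds (V - {v}) E)"

end

theory Submission
  imports Defs
begin

text \<open>Let \<open>v\<close> be \<open>\<gamma>\<close>-critical and \<open>D\<close> an efficient dominating set of \<open>G - v\<close>.
  An efficient dominating set is a minimum dominating set, so \<open>\<gamma>(G - v) = |D|\<close>; since
  \<open>D \<union> {v}\<close> dominates \<open>G\<close>, criticality forces \<open>\<gamma>(G) = |D| + 1\<close>, and then \<open>v\<close> has no
  neighbour in \<open>D\<close>. Hence the closed neighbourhoods \<open>N[d]\<close>, \<open>d \<in> D\<close>, are the same in \<open>G\<close>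
  and in \<open>G - v\<close>, and they partition \<open>V(G) - {v}\<close>. Counting gives
  \<open>|V(G)| = 1 + \<Sum>\<^sub>d\<^sub>\<in>\<^sub>D (deg d + 1)\<close>, and each summand lies between \<open>\<delta> + 1\<close> and \<open>\<Delta> + 1\<close>.\<close>

lemma mem_closed_nbhd_commute:
  assumes "\<And>x y. E x y \<Longrightarrow> E y x" and "u \<in> W" and "w \<in> W"
  shows "u \<in> closed_nbhd W E w \<longleftrightarrow> w \<in> closed_nbhd W E u"
  using assms unfolding closed_nbhd_def nbhd_def by auto

lemma card_closed_nbhd:
  assumes "finite V" and "\<not> E v v"
  shows "card (closed_nbhd V E v) = degree V E v + 1"
proof -
  have "v \<notin> nbhd V E v" and "finite (nbhd V E v)"
    using assms unfolding nbhd_def by auto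
  then show ?thesis unfolding closed_nbhd_def degree_def by simp
qed

lemma domination_number_le:
  "dominating V E S \<Longrightarrow> domination_number V E \<le> card S"
  unfolding domination_number_def by (rule Least_le) blast

lemma domination_number_attained:
  "dominating V E S \<Longrightarrow> \<exists>S'. dominating V E S' \<and> card S' = domination_number V E"
  unfolding domination_number_def by (rule LeastI_ex) blast

lemma efficient_dominating_closed_nbhd_Int:
  assumes "efficient_dominating W E D" and "u \<in> W"
  obtains d where "closed_nbhd W E u \<inter> D = {d}"
proof -
  have "card (closed_nbhd W E u \<inter> D) = 1"
    using assms unfolding efficient_dominating_def by blast
  then show ?thesis
    using that by (metis card_1_singletonE)
qed

lemma efficient_dominating_imp_dominating:
  assumes "efficient_dominating W E D"
  shows "dominating W E D"
  unfolding dominating_def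
proof (intro conjI ballI)
  show "D \<subseteq> W" using assms unfolding efficient_dominating_def by (rule conjunct1)
next
  fix u assume u: "u \<in> W - D"
  then obtain d where d: "closed_nbhd W E u \<inter> D = {d}"
    using efficient_dominating_closed_nbhd_Int[OF assms] by blast
  then have "d \<in> D" "d \<noteq> u" "d \<in> closed_nbhd W E u"
    using u by auto
  then show "\<exists>d\<in>D. E u d" unfolding closed_nbhd_def nbhd_def by auto
qed

text \<open>Every \<open>d \<in> D\<close> lies in \<open>N[s]\<close> for some \<open>s\<close> of the dominating set \<open>S\<close>, and each
  \<open>N[s]\<close> contains exactly one element of \<open>D\<close>.\<close>

lemma card_efficient_dominating_le:
  assumes sym: "\<And>x y. E x y \<Longrightarrow> E y x" and "finite W"
    and D: "efficient_dominating W E D" and S: "dominating W E S"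
  shows "card D \<le> card S"
proof -
  have DW: "D \<subseteq> W" and SW: "S \<subseteq> W"
    using D S unfolding efficient_dominating_def dominating_def by auto
  have cover: "D \<subseteq> (\<Union>s\<in>S. closed_nbhd W E s \<inter> D)"
  proof
    fix d assume d: "d \<in> D"
    obtain s where "s \<in> S" "s = d \<or> E d s"
      using S d DW unfolding dominating_def by blast
    then have "d \<in> closed_nbhd W E s \<inter> D"
      using d DW SW sym unfolding closed_nbhd_def nbhd_def by auto
    with \<open>s \<in> S\<close> show "d \<in> (\<Union>s\<in>S. closed_nbhd W E s \<inter> D)" by blast
  qed
  have one: "card (closed_nbhd W E s \<inter> D) = 1" if "s \<in> S" for s
    using D SW that unfolding efficient_dominating_def by blast
  have "card D \<le> card (\<Union>s\<in>S. closed_nbhd W E s \<inter> D)"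
    using cover DW \<open>finite W\<close> by (intro card_mono) (auto intro: finite_subset)
  also have "\<dots> \<le> (\<Sum>s\<in>S. card (closed_nbhd W E s \<inter> D))"
    using SW \<open>finite W\<close> by (intro card_UN_le) (rule finite_subset)
  also have "\<dots> = card S"
    using one by simp
  finally show ?thesis .
qed

lemma card_efficient_dominating_eq_domination_number:
  assumes "\<And>x y. E x y \<Longrightarrow> E y x" and "finite W" and D: "efficient_dominating W E D"
  shows "card D = domination_number W E"
proof -
  have "dominating W E D"
    using D by (rule efficient_dominating_imp_dominating)
  then obtain S where "dominating W E S" "card S = domination_number W E"
    using domination_number_attained by blast
  then have "card D \<le> domination_number W E"
    using card_efficient_dominating_le[OF assms] by metis
  moreover have "domination_number W E \<le> card D"
    using \<open>dominating W E D\<close> by (rule domination_number_le)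
  ultimately show ?thesis by (rule le_antisym)
qed

lemma card_eq_sum_closed_nbhd_efficient_dominating:
  assumes sym: "\<And>x y. E x y \<Longrightarrow> E y x" and "finite W" and D: "efficient_dominating W E D"
  shows "card W = (\<Sum>d\<in>D. card (closed_nbhd W E d))"
proof -
  have DW: "D \<subseteq> W"
    using D unfolding efficient_dominating_def by blast
  have dominator: "u \<in> closed_nbhd W E d \<longleftrightarrow> closed_nbhd W E u \<inter> D = {d}"
    if "u \<in> W" "d \<in> D" for u d
  proof -
    obtain d' where d': "closed_nbhd W E u \<inter> D = {d'}"
      using efficient_dominating_closed_nbhd_Int[OF D \<open>u \<in> W\<close>] .
    have "u \<in> closed_nbhd W E d \<longleftrightarrow> d \<in> closed_nbhd W E u"
      using mem_closed_nbhd_commute[where E = E, OF sym] that DW by blast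
    also have "\<dots> \<longleftrightarrow> d = d'"
      using d' \<open>d \<in> D\<close> by blast
    finally show ?thesis using d' by auto
  qed
  have partition: "W = (\<Union>d\<in>D. closed_nbhd W E d)"
  proof
    show "W \<subseteq> (\<Union>d\<in>D. closed_nbhd W E d)"
    proof
      fix u assume "u \<in> W"
      then obtain d where "closed_nbhd W E u \<inter> D = {d}"
        using efficient_dominating_closed_nbhd_Int[OF D] by blast
      moreover from this have "d \<in> D" by blast
      ultimately show "u \<in> (\<Union>d\<in>D. closed_nbhd W E d)"
        using dominator \<open>u \<in> W\<close> by blast
    qed
    show "(\<Union>d\<in>D. closed_nbhd W E d) \<subseteq> W"
      using DW unfolding closed_nbhd_def nbhd_def by blast
  qed
  have disjoint: "closed_nbhd W E d1 \<inter> closed_nbhd W E d2 = {}"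
    if "d1 \<in> D" "d2 \<in> D" "d1 \<noteq> d2" for d1 d2
    using dominator that partition by blast
  have "finite D" "\<forall>d\<in>D. finite (closed_nbhd W E d)"
    using DW partition \<open>finite W\<close> by (auto intro: finite_subset)
  then show ?thesis
    using card_UN_disjoint[of D "closed_nbhd W E"] disjoint partition by auto
qed

lemma critical_vertex_efficient_dominating:
  assumes G: "simple_graph V E" and "v \<in> V"
    and D: "efficient_dominating (V - {v}) E D"
    and crit: "domination_number (V - {v}) E < domination_number V E"
  shows "domination_number V E = card D + 1"
    and "card V = (\<Sum>d\<in>D. degree V E d + 1) + 1"
proof -
  have fin: "finite V" and sym: "\<And>x y. E x y \<Longrightarrow> E y x" and irr: "\<And>x. \<not> E x x"
    using G unfolding simple_graph_def by blast+
  have DW: "D \<subseteq> V - {v}"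
    using D unfolding efficient_dominating_def by blast
  have Ddom: "dominating (V - {v}) E D"
    using D by (rule efficient_dominating_imp_dominating)
  have cardD: "card D = domination_number (V - {v}) E"
    using card_efficient_dominating_eq_domination_number[where E = E, OF sym _ D] fin by simp
  have "dominating V E (insert v D)"
    using Ddom \<open>v \<in> V\<close> unfolding dominating_def by auto
  moreover have "finite D" "v \<notin> D"
    using DW fin finite_subset by auto
  ultimately have "domination_number V E \<le> card D + 1"
    using domination_number_le by fastforce
  with crit cardD show gamma: "domination_number V E = card D + 1" by simp
  have no_nbr: "\<not> E v d" if "d \<in> D" for d
  proof
    assume "E v d"
    then have "dominating V E D"
      using Ddom that DW \<open>v \<in> V\<close> unfolding dominating_def by auto
    then show False
      using domination_number_le gamma by fastforce
  qed
  have same_nbhd: "closed_nbhd (V - {v}) E d = closed_nbhd V E d" if "d \<in> D" for d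
    using no_nbr[OF that] unfolding closed_nbhd_def nbhd_def by (auto intro: sym)
  have "card (V - {v}) = (\<Sum>d\<in>D. degree V E d + 1)"
    using card_eq_sum_closed_nbhd_efficient_dominating[where E = E, OF sym _ D] fin same_nbhd
      card_closed_nbhd[where E = E, OF fin irr] by simp
  moreover have "card V = card (V - {v}) + 1"
    using \<open>v \<in> V\<close> fin card_Suc_Diff1 by fastforce
  ultimately show "card V = (\<Sum>d\<in>D. degree V E d + 1) + 1" by simp
qed

theorem theorem3p16:
  fixes V :: "'a set" and E :: "'a \<Rightarrow> 'a \<Rightarrow> bool"
  assumes "simple_graph V E"
    and "hypo_efficient V E"
    and "\<exists>v \<in> V. gamma_critical V E v"
  shows "(min_degree V E + 1) * (domination_number V E - 1) + 1 \<le> card V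
       \<and> card V \<le> (max_degree V E + 1) * (domination_number V E - 1) + 1"
proof -
  obtain v where "v \<in> V" and crit: "domination_number (V - {v}) E < domination_number V E"
    using assms(3) unfolding gamma_critical_def by blast
  then obtain D where D: "efficient_dominating (V - {v}) E D"
    using assms(2) unfolding hypo_efficient_def has_eds_def by blast
  note counting = critical_vertex_efficient_dominating[OF assms(1) \<open>v \<in> V\<close> D crit]
  have "finite (degree V E ` V)" and "D \<subseteq> V"
    using assms(1) D unfolding simple_graph_def efficient_dominating_def by auto
  then have "min_degree V E \<le> degree V E d" "degree V E d \<le> max_degree V E" if "d \<in> D" for d
    unfolding min_degree_def max_degree_def using that by auto
  then have "(\<Sum>d\<in>D. min_degree V E + 1) \<le> (\<Sum>d\<in>D. degree V E d + 1)"
    and "(\<Sum>d\<in>D. degree V E d + 1) \<le> (\<Sum>d\<in>D. max_degree V E + 1)"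
    by (intro sum_mono; simp)+
  then show ?thesis
    using counting by (simp add: mult.commute)
qed

end
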